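(* Let $G$, $k\ge 3$, the choice strings $c_{i,j}$ ($1\le i<j\le k$), the $\binom{k}{2}-(k-1)$ template strings, $L$ and $d$ be as in the Consensus Patterns construction in the context. If $G$ has a clique of size $k$, then the constructed Consensus Patterns instance has a solution: there is a string $s\in\{0,1\}^L$ and, for each choice string and each template string, a substring of it of length $L$, such that the sum over all these strings of the Hamming distances between $s$ and the chosen substrings is at most $d$.
   Context: Let $G=(V,E)$ be an undirected simple graph with $V=\{v_1,\dots,v_n\}$ and edge set $E=\{e_1,\dots,e_m\}$, and let $k\ge 3$ be an integer. All strings are over $\{0,1\}$. For $1\le p\le n$ let $\mathrm{number}(p)=0^{p-1}10^{n-p}$. Let $\mathrm{front\_tag}=(1^{nk^3}0)^{nk^3}0^{nk^3}$ (length $n^2k^6+2nk^3$). For $1\le i<j\le k$ and an edge $e$ joining $v_r,v_s$ with $r<s$ let $\mathrm{encode}(i,j,e)=(0^n)^{i-1}\,\mathrm{number}(r)\,(0^n)^{j-i-1}\,\mathrm{number}(s)\,(0^n)^{k-j}$ and $\mathrm{block}(i,j,e)=\mathrm{front\_tag}\,\mathrm{encode}(i,j,e)$. The choice string is $c_{i,j}=\mathrm{block}(i,j,e_1)\cdots\mathrm{block}(i,j,e_m)$. There are $\binom{k}{2}-(k-1)$ template strings, each equal to $\mathrm{front\_tag}\,1^{nk}$. Set $L=n^2k^6+2nk^3+nk$ and $d=(\binom{k}{2}-(k-1))nk$. The Consensus Patterns instance consists of all choice strings and all template strings with these $L$ and $d$. Consensus Patterns asks for a string $s$ of length $L$ and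 a length-$L$ substring of each input string such that the sum of Hamming distances from $s$ to these substrings is at most $d$. *)

theory Defs
  imports Main
begin

text \<open>Binary strings are represented as bool lists (False = 0, True = 1).
 The graph has vertices 1..n; the edge list E = [e_1,...,e_m] lists each edge
 as a pair (r,s) with r < s.\<close>

definition hamming :: "bool list \<Rightarrow> bool list \<Rightarrow> nat" where
  "hamming xs ys = length (filter (\<lambda>(a,b). a \<noteq> b) (zip xs ys))"

definition number :: "nat \<Rightarrow> nat \<Rightarrow> bool list" where
  "number n p = replicate (p - 1) False @ [True] @ replicate (n - p) False"

definition front_tag :: "nat \<Rightarrow> nat \<Rightarrow> bool list" where
  "front_tag n k = concat (replicate (n * k^3) (replicate (n * k^3) True @ [False]))
                   @ replicate (n * k^3) False"

definition zeros :: "nat \<Rightarrow> nat \<Rightarrow> bool list" where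
  "zeros n t = replicate (t * n) False"

definition encode :: "nat \<Rightarrow> nat \<Rightarrow> nat \<Rightarrow> nat \<Rightarrow> nat \<times> nat \<Rightarrow> bool list" where
  "encode n k i j e = (case e of (r, s) \<Rightarrow>
     zeros n (i - 1) @ number n r @ zeros n (j - i - 1) @ number n s @ zeros n (k - j))"

definition block :: "nat \<Rightarrow> nat \<Rightarrow> nat \<Rightarrow> nat \<Rightarrow> nat \<times> nat \<Rightarrow> bool list" where
  "block n k i j e = front_tag n k @ encode n k i j e"

definition choice_string :: "nat \<Rightarrow> nat \<Rightarrow> (nat \<times> nat) list \<Rightarrow> nat \<Rightarrow> nat \<Rightarrow> bool list" where
  "choice_string n k E i j = concat (map (block n k i j) E)"

definition template_string :: "nat \<Rightarrow> nat \<Rightarrow> bool list" where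
  "template_string n k = front_tag n k @ replicate (n * k) True"

definition num_templates :: "nat \<Rightarrow> nat" where
  "num_templates k = (k choose 2) - (k - 1)"

definition cp_strings :: "nat \<Rightarrow> nat \<Rightarrow> (nat \<times> nat) list \<Rightarrow> bool list list" where
  "cp_strings n k E =
     [choice_string n k E i j. i \<leftarrow> [1..<k+1], j \<leftarrow> [i+1..<k+1]]
     @ replicate (num_templates k) (template_string n k)"

definition cp_L :: "nat \<Rightarrow> nat \<Rightarrow> nat" where
  "cp_L n k = n^2 * k^6 + 2 * n * k^3 + n * k"

definition cp_d :: "nat \<Rightarrow> nat \<Rightarrow> nat" where
  "cp_d n k = num_templates k * n * k"

definition consensus_patterns_solvable :: "bool list list \<Rightarrow> nat \<Rightarrow> nat \<Rightarrow> bool" where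
  "consensus_patterns_solvable strs L d \<longleftrightarrow>
     (\<exists>s pos. length s = L \<and>
        (\<forall>t < length strs. pos t + L \<le> length (strs ! t)) \<and>
        (\<Sum>t < length strs. hamming s (take L (drop (pos t) (strs ! t)))) \<le> d)"

definition simple_graph :: "nat \<Rightarrow> (nat \<times> nat) list \<Rightarrow> bool" where
  "simple_graph n E \<longleftrightarrow> distinct E \<and> (\<forall>(r,s) \<in> set E. 1 \<le> r \<and> r < s \<and> s \<le> n)"

definition adjacent :: "(nat \<times> nat) list \<Rightarrow> nat \<Rightarrow> nat \<Rightarrow> bool" where
  "adjacent E u v \<longleftrightarrow> (u, v) \<in> set E \<or> (v, u) \<in> set E"

definition has_clique :: "nat \<Rightarrow> (nat \<times> nat) list \<Rightarrow> nat \<Rightarrow> bool" where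
  "has_clique n E k \<longleftrightarrow> (\<exists>K. K \<subseteq> {1..n} \<and> card K = k \<and>
      (\<forall>u \<in> K. \<forall>v \<in> K. u \<noteq> v \<longrightarrow> adjacent E u v))"

end

theory Submission
  imports Defs
begin

text \<open>Enumerate the clique increasingly as u_1 < ... < u_k and take as consensus the front tag
  followed by number(u_1) ... number(u_k). In the choice string c_{i,j} pick the block of the edge
  u_i u_j: it agrees with the consensus except for the single 1 of each of the other k - 2 slots.
  Every template string is at distance k(n - 1). With T = (k choose 2) - (k - 1) the identity
  (k choose 2)(k - 2) = T k turns the total (k choose 2)(k - 2) + T k(n - 1) into exactly
  T k n = d.\<close>

lemma length_concat_equal_length:
  "(\<And>x. x \<in> set xss \<Longrightarrow> length x = L) \<Longrightarrow> length (concat xss) = length xss * L"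
  by (induction xss) auto

lemma take_drop_concat_equal_length:
  assumes "\<And>x. x \<in> set xss \<Longrightarrow> length x = L" and "m < length xss"
  shows "take L (drop (m * L) (concat xss)) = xss ! m"
  using assms
proof (induction xss arbitrary: m)
  case (Cons xs xss)
  then show ?case by (cases m) (simp_all add: add.commute drop_append)
qed simp

lemma concat_replicate_replicate: "concat (replicate t (replicate n x)) = replicate (t * n) x"
  by (induction t) (auto simp: replicate_add)

lemma upt_split_at_two:
  assumes "a \<le> i" "i < j" "j < b"
  shows "[a..<b] = [a..<i] @ i # [Suc i..<j] @ j # [Suc j..<b]"
proof -
  have "[a..<b] = [a..<i] @ [i..<j] @ [j..<b]"
    using assms upt_add_eq_append[of a i "b - i"] upt_add_eq_append[of i j "b - j"] by simp
  then show ?thesis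
    using assms by (simp add: upt_conv_Cons del: upt_Suc)
qed

lemma length_upper_pairs:
  "length [f i j. i \<leftarrow> [a..<m], j \<leftarrow> [i+1..<m]] = (m - a) choose 2"
proof (induction "m - a" arbitrary: a)
  case 0
  then show ?case by simp
next
  case (Suc d)
  then have "[a..<m] = a # [Suc a..<m]" "m - a = Suc (m - Suc a)"
    by (simp_all add: upt_conv_Cons)
  then show ?case
    using Suc.hyps(1)[of "Suc a"] Suc.hyps(2) by (simp add: numeral_2_eq_2)
qed

lemma hamming_append:
  "length xs = length ys \<Longrightarrow> hamming (xs @ xs') (ys @ ys') = hamming xs ys + hamming xs' ys'"
  by (simp add: hamming_def)

lemma hamming_self [simp]: "hamming xs xs = 0"
  by (induction xs) (auto simp: hamming_def)

lemma hamming_replicate: "hamming xs (replicate (length xs) b) = length (filter (\<lambda>x. x \<noteq> b) xs)"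
  by (induction xs) (auto simp: hamming_def)

lemma hamming_concat_map:
  "(\<And>x. x \<in> set xs \<Longrightarrow> length (f x) = length (g x)) \<Longrightarrow>
   hamming (concat (map f xs)) (concat (map g xs)) = (\<Sum>x\<leftarrow>xs. hamming (f x) (g x))"
  by (induction xs) (auto simp: hamming_append hamming_def)

lemma length_number [simp]: "1 \<le> p \<Longrightarrow> p \<le> n \<Longrightarrow> length (number n p) = n"
  by (simp add: number_def)

lemma hamming_number_zeros: "1 \<le> p \<Longrightarrow> p \<le> n \<Longrightarrow> hamming (number n p) (replicate n False) = 1"
  using hamming_replicate[of "number n p" False] by simp (simp add: number_def)

lemma hamming_number_ones: "1 \<le> p \<Longrightarrow> p \<le> n \<Longrightarrow> hamming (number n p) (replicate n True) = n - 1"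
  using hamming_replicate[of "number n p" True] by simp (simp add: number_def)

lemma length_front_tag: "length (front_tag n k) = n^2 * k^6 + 2 * n * k^3"
proof -
  have "length (front_tag n k) = (n * k^3) * (n * k^3 + 1) + n * k^3"
    unfolding front_tag_def by (simp add: length_concat sum_list_replicate)
  also have "\<dots> = n^2 * k^6 + 2 * n * k^3"
    by (simp add: algebra_simps power2_eq_square flip: power_add)
  finally show ?thesis .
qed

lemma encode_as_slots:
  assumes "1 \<le> i" "i < j" "j \<le> k"
  shows "encode n k i j (a, b) = concat (map (\<lambda>l. if l = i then number n a
           else if l = j then number n b else replicate n False) [1..<k+1])"
    (is "_ = concat (map ?slot _)")
proof -
  have gap: "concat (map ?slot [c..<d]) = zeros n (d - c)"
    if "i \<notin> {c..<d}" "j \<notin> {c..<d}" for c d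
  proof -
    have "map ?slot [c..<d] = map (\<lambda>_. replicate n False) [c..<d]"
      using that by (intro map_cong) auto
    then have "map ?slot [c..<d] = replicate (d - c) (replicate n False)"
      by (simp add: map_replicate_const)
    then show ?thesis by (simp add: zeros_def concat_replicate_replicate)
  qed
  have "[1..<k+1] = [1..<i] @ i # [Suc i..<j] @ j # [Suc j..<k+1]"
    using assms by (intro upt_split_at_two) auto
  then show ?thesis
    using assms by (simp add: gap encode_def del: upt_Suc)
qed

lemma length_encode:
  assumes "1 \<le> i" "i < j" "j \<le> k" "a \<in> {1..n}" "b \<in> {1..n}"
  shows "length (encode n k i j (a, b)) = k * n"
  unfolding encode_as_slots[OF assms(1-3)] using assms(4,5)
  by (subst length_concat_equal_length[where L = n]) auto

lemma num_templates_eq: "num_templates k = (k - 1) choose 2"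
proof (cases k)
  case (Suc k')
  then show ?thesis by (simp add: num_templates_def numeral_2_eq_2)
qed (simp add: num_templates_def)

lemma num_templates_mult: "num_templates k * k = (k choose 2) * (k - 2)"
  using binomial_absorb_comp[of k 2] by (simp add: num_templates_eq mult.commute)

lemma simple_graph_edgeD:
  "simple_graph n E \<Longrightarrow> (a, b) \<in> set E \<Longrightarrow> 1 \<le> a \<and> a < b \<and> b \<le> n"
  unfolding simple_graph_def by blast

lemma has_cliqueE:
  assumes "simple_graph n E" and "has_clique n E k"
  obtains u where "u ` {1..k} \<subseteq> {1..n}"
    and "\<And>i j. 1 \<le> i \<Longrightarrow> i < j \<Longrightarrow> j \<le> k \<Longrightarrow> (u i, u j) \<in> set E"
proof -
  obtain K where K: "K \<subseteq> {1..n}" "card K = k" "\<forall>v\<in>K. \<forall>w\<in>K. v \<noteq> w \<longrightarrow> adjacent E v w"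
    using assms(2) unfolding has_clique_def by blast
  define xs where "xs = sorted_list_of_set K"
  have "finite K"
    using K(1) finite_subset by blast
  then have xs: "length xs = k" "set xs = K" "sorted_wrt (<) xs"
    using K(2) by (simp_all add: xs_def)
  define u where "u l = xs ! (l - 1)" for l
  have in_K: "u l \<in> K" if "l \<in> {1..k}" for l
    using that xs(1,2) nth_mem[of "l - 1" xs] unfolding u_def by auto
  have "(u i, u j) \<in> set E" if "1 \<le> i" "i < j" "j \<le> k" for i j
  proof -
    have "u i < u j"
      using sorted_wrt_nth_less[OF xs(3), of "i - 1" "j - 1"] that xs(1) unfolding u_def by auto
    moreover have "adjacent E (u i) (u j)"
      using K(3) in_K[of i] in_K[of j] that \<open>u i < u j\<close> by auto
    ultimately show ?thesis
      using simple_graph_edgeD[OF assms(1), of "u j" "u i"] unfolding adjacent_def by auto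
  qed
  moreover have "u ` {1..k} \<subseteq> {1..n}"
    using in_K K(1) by blast
  ultimately show thesis
    using that by blast
qed

definition clique_code :: "nat \<Rightarrow> nat \<Rightarrow> (nat \<Rightarrow> nat) \<Rightarrow> bool list" where
  "clique_code n k u = concat (map (\<lambda>l. number n (u l)) [1..<k+1])"

definition clique_consensus :: "nat \<Rightarrow> nat \<Rightarrow> (nat \<Rightarrow> nat) \<Rightarrow> bool list" where
  "clique_consensus n k u = front_tag n k @ clique_code n k u"

lemma length_clique_code:
  assumes "u ` {1..k} \<subseteq> {1..n}"
  shows "length (clique_code n k u) = k * n"
proof -
  have "length (number n (u l)) = n" if "l \<in> set [1..<k+1]" for l
    using that assms by (auto simp: image_subset_iff)
  then show ?thesis
    unfolding clique_code_def by (subst length_concat_equal_length[where L = n]) auto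
qed

lemma hamming_clique_code_encode:
  assumes u: "u ` {1..k} \<subseteq> {1..n}" and ijk: "1 \<le> i" "i < j" "j \<le> k"
  shows "hamming (clique_code n k u) (encode n k i j (u i, u j)) = k - 2"
proof -
  have "hamming (clique_code n k u) (encode n k i j (u i, u j))
      = (\<Sum>l\<leftarrow>[1..<k+1]. hamming (number n (u l))
          (if l = i then number n (u i) else if l = j then number n (u j) else replicate n False))"
    unfolding clique_code_def encode_as_slots[OF ijk] using u ijk
    by (intro hamming_concat_map) (auto simp: image_subset_iff)
  also have "\<dots> = (\<Sum>l\<leftarrow>[1..<k+1]. if l \<notin> {i, j} then 1 else 0)"
  proof (intro arg_cong[where f = sum_list] map_cong refl)
    fix l assume "l \<in> set [1..<k+1]"
    then have "1 \<le> u l" "u l \<le> n" using u by (auto simp: image_subset_iff)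
    then show "hamming (number n (u l))
        (if l = i then number n (u i) else if l = j then number n (u j) else replicate n False)
        = (if l \<notin> {i, j} then 1 else 0)"
      by (simp add: hamming_number_zeros)
  qed
  also have "\<dots> = card {l \<in> {1..<k+1}. l \<notin> {i, j}}"
    by (simp only: interv_sum_list_conv_sum_set_nat set_upt sum.inter_filter[symmetric] card_eq_sum
        finite_atLeastLessThan)
  also have "\<dots> = card ({1..<k+1} - {i, j})"
    by (simp only: set_diff_eq)
  also have "\<dots> = k - 2"
    using ijk by (subst card_Diff_subset) auto
  finally show ?thesis .
qed

lemma hamming_clique_code_ones:
  assumes u: "u ` {1..k} \<subseteq> {1..n}"
  shows "hamming (clique_code n k u) (replicate (n * k) True) = k * (n - 1)"
proof -
  have "replicate (n * k) True = concat (map (\<lambda>_. replicate n True) [1..<k+1])"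
    by (simp add: map_replicate_const concat_replicate_replicate mult.commute del: upt_Suc)
  then have "hamming (clique_code n k u) (replicate (n * k) True)
      = (\<Sum>l\<leftarrow>[1..<k+1]. hamming (number n (u l)) (replicate n True))"
    unfolding clique_code_def using u
    by (auto intro!: hamming_concat_map simp: image_subset_iff simp del: upt_Suc)
  also have "\<dots> = (\<Sum>l\<leftarrow>[1..<k+1]. n - 1)"
  proof (intro arg_cong[where f = sum_list] map_cong refl)
    fix l assume "l \<in> set [1..<k+1]"
    then have "1 \<le> u l" "u l \<le> n" using u by (auto simp: image_subset_iff)
    then show "hamming (number n (u l)) (replicate n True) = n - 1"
      by (rule hamming_number_ones)
  qed
  finally show ?thesis by (simp add: sum_list_triv)
qed

lemma length_clique_consensus:
  "u ` {1..k} \<subseteq> {1..n} \<Longrightarrow> length (clique_consensus n k u) = cp_L n k"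
  using length_clique_code by (simp add: clique_consensus_def cp_L_def length_front_tag)

definition has_window_near :: "bool list \<Rightarrow> nat \<Rightarrow> bool list \<Rightarrow> bool" where
  "has_window_near s b x \<longleftrightarrow>
     (\<exists>p. p + length s \<le> length x \<and> hamming s (take (length s) (drop p x)) \<le> b)"

lemma consensus_patterns_solvableI:
  assumes "list_all2 (has_window_near s) bs strs" and "sum_list bs \<le> d"
  shows "consensus_patterns_solvable strs (length s) d"
proof -
  have "\<forall>t < length strs. \<exists>p. p + length s \<le> length (strs ! t)
      \<and> hamming s (take (length s) (drop p (strs ! t))) \<le> bs ! t"
    using assms(1) by (auto simp: list_all2_conv_all_nth has_window_near_def)
  then obtain pos where pos: "\<forall>t < length strs. pos t + length s \<le> length (strs ! t)
      \<and> hamming s (take (length s) (drop (pos t) (strs ! t))) \<le> bs ! t"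
    by metis
  have "(\<Sum>t < length strs. hamming s (take (length s) (drop (pos t) (strs ! t))))
      \<le> (\<Sum>t < length bs. bs ! t)"
    using pos list_all2_lengthD[OF assms(1)] by (auto intro: sum_mono)
  also have "\<dots> \<le> d"
    using assms(2) by (simp add: sum_list_sum_nth atLeast0LessThan)
  finally show ?thesis
    unfolding consensus_patterns_solvable_def using pos by blast
qed

lemma choice_string_has_window_near:
  assumes "simple_graph n E" and u: "u ` {1..k} \<subseteq> {1..n}"
    and ijk: "1 \<le> i" "i < j" "j \<le> k" and edge: "(u i, u j) \<in> set E"
  shows "has_window_near (clique_consensus n k u) (k - 2) (choice_string n k E i j)"
proof -
  let ?s = "clique_consensus n k u"
  have len_s: "length ?s = length (front_tag n k) + k * n"
    using length_clique_code[OF u] by (simp add: clique_consensus_def)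
  have len_block: "length (block n k i j e) = length ?s" if "e \<in> set E" for e
  proof (cases e)
    case (Pair a b)
    then have "a \<in> {1..n}" "b \<in> {1..n}"
      using simple_graph_edgeD[OF assms(1), of a b] that by auto
    then show ?thesis
      using Pair len_s length_encode[OF ijk] by (simp add: block_def)
  qed
  obtain m where m: "m < length E" "E ! m = (u i, u j)"
    using edge by (auto simp: in_set_conv_nth)
  have "take (length ?s) (drop (m * length ?s) (choice_string n k E i j))
      = block n k i j (u i, u j)"
    unfolding choice_string_def using len_block m by (subst take_drop_concat_equal_length) auto
  moreover have "m * length ?s + length ?s \<le> length (choice_string n k E i j)"
  proof -
    have "length (choice_string n k E i j) = length E * length ?s"
      unfolding choice_string_def using len_block
      by (subst length_concat_equal_length[where L = "length ?s"]) auto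
    then show ?thesis
      using mult_le_mono1[of "Suc m" "length E" "length ?s"] m(1) by simp
  qed
  moreover have "hamming ?s (block n k i j (u i, u j)) = k - 2"
    unfolding block_def clique_consensus_def using hamming_clique_code_encode[OF u ijk]
    by (simp add: hamming_append)
  ultimately show ?thesis
    unfolding has_window_near_def by (metis order_refl)
qed

lemma template_string_has_window_near:
  assumes u: "u ` {1..k} \<subseteq> {1..n}"
  shows "has_window_near (clique_consensus n k u) (k * (n - 1)) (template_string n k)"
proof -
  have "length (template_string n k) = length (clique_consensus n k u)"
    using length_clique_code[OF u]
    by (simp add: clique_consensus_def template_string_def mult.commute)
  moreover have "hamming (clique_consensus n k u) (template_string n k) = k * (n - 1)"
    unfolding template_string_def clique_consensus_def
    using hamming_clique_code_ones[OF u] by (simp add: hamming_append)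
  ultimately show ?thesis
    unfolding has_window_near_def by (intro exI[of _ 0]) simp
qed

lemma cp_strings_have_windows_near:
  assumes "simple_graph n E" and u: "u ` {1..k} \<subseteq> {1..n}"
    and edges: "\<And>i j. 1 \<le> i \<Longrightarrow> i < j \<Longrightarrow> j \<le> k \<Longrightarrow> (u i, u j) \<in> set E"
  shows "list_all2 (has_window_near (clique_consensus n k u))
           (replicate (k choose 2) (k - 2) @ replicate (num_templates k) (k * (n - 1)))
           (cp_strings n k E)"
  unfolding cp_strings_def
proof (rule list_all2_appendI)
  let ?choices = "[choice_string n k E i j. i \<leftarrow> [1..<k+1], j \<leftarrow> [i+1..<k+1]]"
  have "length ?choices = k choose 2"
    using length_upper_pairs[where a = 1 and m = "k + 1"] by (simp only: add_diff_cancel_right')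
  then have "replicate (k choose 2) (k - 2) = map (\<lambda>_. k - 2) ?choices"
    by (simp only: map_replicate_const)
  moreover have "list_all2 (has_window_near (clique_consensus n k u))
      (map (\<lambda>_. k - 2) ?choices) ?choices"
    unfolding list_all2_map1 list_all2_same
    using choice_string_has_window_near[OF assms(1) u] edges by (auto simp del: upt_Suc)
  ultimately show "list_all2 (has_window_near (clique_consensus n k u))
      (replicate (k choose 2) (k - 2)) ?choices"
    by simp
  show "list_all2 (has_window_near (clique_consensus n k u))
      (replicate (num_templates k) (k * (n - 1)))
      (replicate (num_templates k) (template_string n k))"
    using template_string_has_window_near[OF u] by (simp add: list_all2_conv_all_nth)
qed

lemma clique_costs_eq_cp_d:
  assumes "n \<ge> 1"
  shows "sum_list (replicate (k choose 2) (k - 2) @ replicate (num_templates k) (k * (n - 1)))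
    = cp_d n k"
proof -
  have "sum_list (replicate (k choose 2) (k - 2) @ replicate (num_templates k) (k * (n - 1)))
      = num_templates k * k + num_templates k * k * (n - 1)"
    by (simp add: sum_list_replicate num_templates_mult)
  also have "\<dots> = num_templates k * k * n"
    using assms by (simp flip: add_mult_distrib2 mult_Suc_right)
  finally show ?thesis
    by (simp add: cp_d_def mult.commute mult.left_commute)
qed

theorem proposition5:
  fixes n k :: nat and E :: "(nat \<times> nat) list"
  assumes "simple_graph n E"
    and "k \<ge> 3"
    and "has_clique n E k"
  shows "consensus_patterns_solvable (cp_strings n k E) (cp_L n k) (cp_d n k)"
proof -
  obtain u where u: "u ` {1..k} \<subseteq> {1..n}"
    and edges: "\<And>i j. 1 \<le> i \<Longrightarrow> i < j \<Longrightarrow> j \<le> k \<Longrightarrow> (u i, u j) \<in> set E"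
    using has_cliqueE[OF assms(1,3)] by blast
  have "u 1 \<in> {1..n}"
    using assms(2) by (intro subsetD[OF u] imageI) auto
  then have "n \<ge> 1"
    by simp
  then show ?thesis
    using consensus_patterns_solvableI[OF cp_strings_have_windows_near[OF assms(1) u edges]
        eq_imp_le[OF clique_costs_eq_cp_d]]
    by (simp only: length_clique_consensus[OF u])
qed

end
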